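(* Let $\Omega\subset\mathbb{R}^n$ be a domain, $\mathcal{S}$ a basis of shapes in $\Omega$ and $1\le p<\infty$. Then $\mathrm{BMO}^p_{\mathcal{S}}(\Omega)$ is complete: if $\{f_i\}\subset\mathrm{BMO}^p_{\mathcal{S}}(\Omega)$ satisfies $\|f_i-f_j\|_{\mathrm{BMO}^p_{\mathcal{S}}}\to0$ as $i,j\to\infty$, then there exists $f\in\mathrm{BMO}^p_{\mathcal{S}}(\Omega)$ with $\|f_i-f\|_{\mathrm{BMO}^p_{\mathcal{S}}}\to0$.
   Context: A domain is an open connected set. A shape is an open set $S\subset\mathbb{R}^n$ with $0<|S|<\infty$. A basis of shapes in $\Omega$ is a collection of shapes contained in $\Omega$ covering $\Omega$. For $f\in L^1(S)$, $f_S=\frac1{|S|}\int_Sf$. $\mathrm{BMO}^p_{\mathcal{S}}(\Omega)$ is the space of functions $f$ with $f\in L^1(S)$ for all $S\in\mathcal{S}$ such that there is $K\ge0$ with $\big(\frac1{|S|}\int_S|f-f_S|^p\big)^{1/p}\le K$ for all $S\in\mathcal{S}$; $\|f\|_{\mathrm{BMO}^p_{\mathcal{S}}}$ is the infimum of such $K$ (a seminorm, vanishing exactly on a.e. constant functions). *)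

theory Defs
  imports "HOL-Analysis.Analysis"
begin

definition domain :: "'a::euclidean_space set \<Rightarrow> bool" where
  "domain \<Omega> \<longleftrightarrow> open \<Omega> \<and> connected \<Omega>"

definition shape :: "'a::euclidean_space set \<Rightarrow> bool" where
  "shape S \<longleftrightarrow> open S \<and> 0 < emeasure lebesgue S \<and> emeasure lebesgue S < \<infinity>"

definition basis_of_shapes :: "'a::euclidean_space set set \<Rightarrow> 'a set \<Rightarrow> bool" where
  "basis_of_shapes \<S> \<Omega> \<longleftrightarrow> (\<forall>S\<in>\<S>. shape S \<and> S \<subseteq> \<Omega>) \<and> \<Union>\<S> = \<Omega>"

definition avg :: "'a::euclidean_space set \<Rightarrow> ('a \<Rightarrow> real) \<Rightarrow> real" where
  "avg S f = (1 / measure lebesgue S) * (LINT x:S|lebesgue. f x)"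

definition osc :: "real \<Rightarrow> 'a::euclidean_space set \<Rightarrow> ('a \<Rightarrow> real) \<Rightarrow> real" where
  "osc p S f = ((1 / measure lebesgue S) * (LINT x:S|lebesgue. \<bar>f x - avg S f\<bar> powr p)) powr (1 / p)"

text \<open>Membership in BMO^p_S: f is integrable on each shape, the p-th power of the
  oscillation is integrable on each shape (so the integral is a genuine finite one),
  and the oscillations are uniformly bounded.\<close>
definition BMO :: "real \<Rightarrow> 'a::euclidean_space set set \<Rightarrow> ('a \<Rightarrow> real) set" where
  "BMO p \<S> = {f. (\<forall>S\<in>\<S>. set_integrable lebesgue S f
        \<and> set_integrable lebesgue S (\<lambda>x. \<bar>f x - avg S f\<bar> powr p))
      \<and> (\<exists>K\<ge>0. \<forall>S\<in>\<S>. osc p S f \<le> K)}"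

definition bmo_norm :: "real \<Rightarrow> 'a::euclidean_space set set \<Rightarrow> ('a \<Rightarrow> real) \<Rightarrow> real" where
  "bmo_norm p \<S> f = Inf {K. K \<ge> 0 \<and> (\<forall>S\<in>\<S>. osc p S f \<le> K)}"

end

theory Submission
  imports Defs
begin

text \<open>
  Choose a subsequence \<open>f (\<phi> k)\<close> whose consecutive differences have BMO norm below \<open>2\<^sup>-\<^sup>k\<close>
  and normalise it by subtracting its averages over one fixed shape \<open>S\<^sub>0\<close>. Since \<open>\<Omega>\<close> is
  connected and the shapes are open, every shape \<open>T\<close> is reached from \<open>S\<^sub>0\<close> by a chain of
  overlapping shapes, and overlaps of positive measure give \<open>\<bar>avg T h - avg S\<^sub>0 h\<bar> \<le> C\<^sub>T \<parallel>h\<parallel>\<close>.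
  Hence the normalised subsequence has summable \<open>L\<^sup>1(T)\<close> increments on every shape and converges
  almost everywhere and in \<open>L\<^sup>1\<close> on each shape to a single function \<open>g\<close>. Fatou's lemma transfers
  the Cauchy bounds \<open>\<parallel>f i - f j\<parallel> < \<epsilon>\<close> to \<open>\<parallel>f i - g\<parallel> \<le> \<epsilon>\<close>.
\<close>

section \<open>Integral estimates\<close>

lemma abs_diff_powr_le:
  fixes a b p :: real
  assumes "p > 0"
  shows "\<bar>a - b\<bar> powr p \<le> 2 powr p * (\<bar>a\<bar> powr p + \<bar>b\<bar> powr p)"
proof -
  have "\<bar>a - b\<bar> powr p \<le> (2 * max \<bar>a\<bar> \<bar>b\<bar>) powr p"
    using assms by (intro powr_mono2) auto
  also have "\<dots> = 2 powr p * max \<bar>a\<bar> \<bar>b\<bar> powr p"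
    by (simp add: powr_mult)
  also have "max \<bar>a\<bar> \<bar>b\<bar> powr p \<le> \<bar>a\<bar> powr p + \<bar>b\<bar> powr p"
    by (simp add: max_def)
  finally show ?thesis by (simp add: mult_left_mono)
qed

lemma abs_le_powr_div:
  fixes t e p :: real
  assumes "1 \<le> p" "0 < e"
  shows "\<bar>t\<bar> \<le> e + \<bar>t\<bar> powr p / e powr (p - 1)"
proof (cases "\<bar>t\<bar> \<le> e")
  case True
  then show ?thesis by (simp add: add_increasing2)
next
  case False
  have "\<bar>t\<bar> * e powr (p - 1) \<le> \<bar>t\<bar> * \<bar>t\<bar> powr (p - 1)"
    using False assms by (intro mult_left_mono powr_mono2) auto
  also have "\<dots> = \<bar>t\<bar> powr p"
    using False assms by (simp add: powr_mult_base)
  finally show ?thesis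
    using assms by (simp add: pos_le_divide_eq add_increasing)
qed

lemma powr_inverse_le_iff:
  fixes x K p :: real
  assumes "0 \<le> x" "0 \<le> K" "0 < p"
  shows "x powr (1/p) \<le> K \<longleftrightarrow> x \<le> K powr p"
proof
  assume "x powr (1/p) \<le> K"
  then have "(x powr (1/p)) powr p \<le> K powr p"
    using assms by (intro powr_mono2) auto
  then show "x \<le> K powr p"
    using assms by (simp add: powr_powr)
next
  assume "x \<le> K powr p"
  then have "x powr (1/p) \<le> (K powr p) powr (1/p)"
    using assms by (intro powr_mono2) auto
  then show "x powr (1/p) \<le> K"
    using assms by (simp add: powr_powr)
qed

lemma integral_abs_diff_powr_le:
  fixes u w :: "'b \<Rightarrow> real"
  assumes "p > 0"
    and "integrable M (\<lambda>x. \<bar>u x - a\<bar> powr p)" "integrable M (\<lambda>x. \<bar>w x - b\<bar> powr p)"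
    and [measurable]: "u \<in> borel_measurable M" "w \<in> borel_measurable M"
  shows "integrable M (\<lambda>x. \<bar>(u x - w x) - (a - b)\<bar> powr p)"
    and "(\<integral>x. \<bar>(u x - w x) - (a - b)\<bar> powr p \<partial>M)
           \<le> 2 powr p * ((\<integral>x. \<bar>u x - a\<bar> powr p \<partial>M) + (\<integral>x. \<bar>w x - b\<bar> powr p \<partial>M))"
proof -
  have bound: "\<bar>(u x - w x) - (a - b)\<bar> powr p \<le> 2 powr p * (\<bar>u x - a\<bar> powr p + \<bar>w x - b\<bar> powr p)" for x
    using abs_diff_powr_le[OF \<open>p > 0\<close>, of "u x - a" "w x - b"] by (simp add: algebra_simps)
  have majorant: "integrable M (\<lambda>x. 2 powr p * (\<bar>u x - a\<bar> powr p + \<bar>w x - b\<bar> powr p))"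
    using assms(2,3) by auto
  show int: "integrable M (\<lambda>x. \<bar>(u x - w x) - (a - b)\<bar> powr p)"
    by (rule Bochner_Integration.integrable_bound[OF majorant]) (use bound in auto)
  have "(\<integral>x. \<bar>(u x - w x) - (a - b)\<bar> powr p \<partial>M)
      \<le> (\<integral>x. 2 powr p * (\<bar>u x - a\<bar> powr p + \<bar>w x - b\<bar> powr p) \<partial>M)"
    using int majorant bound by (rule integral_mono)
  also have "\<dots> = 2 powr p * ((\<integral>x. \<bar>u x - a\<bar> powr p \<partial>M) + (\<integral>x. \<bar>w x - b\<bar> powr p \<partial>M))"
    using assms(2,3) by simp
  finally show "(\<integral>x. \<bar>(u x - w x) - (a - b)\<bar> powr p \<partial>M)
      \<le> 2 powr p * ((\<integral>x. \<bar>u x - a\<bar> powr p \<partial>M) + (\<integral>x. \<bar>w x - b\<bar> powr p \<partial>M))" .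
qed

text \<open>A substitute for Hoelder's inequality (which would give the constant 1 instead of 2),
  obtained by splitting \<open>\<bar>v\<bar>\<close> at height \<open>e\<close>.\<close>
lemma (in finite_measure) integral_abs_le_of_integral_powr_le:
  fixes v :: "'a \<Rightarrow> real"
  assumes "1 \<le> p" "0 < e"
    and "integrable M v" "integrable M (\<lambda>x. \<bar>v x\<bar> powr p)"
    and "(\<integral>x. \<bar>v x\<bar> powr p \<partial>M) \<le> measure M (space M) * e powr p"
  shows "(\<integral>x. \<bar>v x\<bar> \<partial>M) \<le> 2 * e * measure M (space M)"
proof -
  have "(\<integral>x. \<bar>v x\<bar> \<partial>M) \<le> (\<integral>x. e + \<bar>v x\<bar> powr p / e powr (p - 1) \<partial>M)"
    using assms abs_le_powr_div[OF assms(1,2)] by (intro integral_mono) auto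
  also have "\<dots> = e * measure M (space M) + (\<integral>x. \<bar>v x\<bar> powr p \<partial>M) / e powr (p - 1)"
    using assms(4) by simp
  also have "\<dots> \<le> e * measure M (space M) + measure M (space M) * e powr p / e powr (p - 1)"
    using assms by (intro add_left_mono divide_right_mono) auto
  also have "measure M (space M) * e powr p / e powr (p - 1) = e * measure M (space M)"
    using \<open>0 < e\<close> by (simp add: powr_diff)
  finally show ?thesis by simp
qed

text \<open>Fatou's lemma for \<open>\<bar>s n - c n\<bar> powr p\<close>.\<close>
lemma integral_abs_powr_le_of_AE_limit:
  fixes s :: "nat \<Rightarrow> 'b \<Rightarrow> real"
  assumes "p > 0" "0 \<le> B"
    and [measurable]: "\<And>n. s n \<in> borel_measurable M" "v \<in> borel_measurable M"
    and lim: "AE x in M. (\<lambda>n. s n x) \<longlonglongrightarrow> v x" "c \<longlonglongrightarrow> c0"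
    and bound: "\<And>n. n \<ge> N \<Longrightarrow> integrable M (\<lambda>x. \<bar>s n x - c n\<bar> powr p)
        \<and> (\<integral>x. \<bar>s n x - c n\<bar> powr p \<partial>M) \<le> B"
  shows "integrable M (\<lambda>x. \<bar>v x - c0\<bar> powr p)"
    and "(\<integral>x. \<bar>v x - c0\<bar> powr p \<partial>M) \<le> B"
proof -
  have "(\<integral>\<^sup>+x. ennreal (\<bar>v x - c0\<bar> powr p) \<partial>M)
      = (\<integral>\<^sup>+x. liminf (\<lambda>n. ennreal (\<bar>s n x - c n\<bar> powr p)) \<partial>M)"
    using lim(1)
  proof (intro nn_integral_cong_AE, eventually_elim)
    case (elim x)
    have "(\<lambda>n. \<bar>s n x - c n\<bar> powr p) \<longlonglongrightarrow> \<bar>v x - c0\<bar> powr p"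
      using elim lim(2) \<open>p > 0\<close> by (intro tendsto_powr' tendsto_intros) auto
    then have "(\<lambda>n. ennreal (\<bar>s n x - c n\<bar> powr p)) \<longlonglongrightarrow> ennreal (\<bar>v x - c0\<bar> powr p)"
      by (rule tendsto_ennrealI)
    then show ?case
      by (rule lim_imp_Liminf[symmetric, OF trivial_limit_sequentially])
  qed
  also have "\<dots> \<le> liminf (\<lambda>n. \<integral>\<^sup>+x. ennreal (\<bar>s n x - c n\<bar> powr p) \<partial>M)"
    by (intro nn_integral_liminf) measurable
  also have "\<dots> \<le> ennreal B"
  proof (intro Liminf_le eventually_sequentiallyI)
    fix n assume "N \<le> n"
    then show "(\<integral>\<^sup>+x. ennreal (\<bar>s n x - c n\<bar> powr p) \<partial>M) \<le> ennreal B"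
      using bound[of n] by (simp add: nn_integral_eq_integral ennreal_leI)
  qed simp
  finally have nn: "(\<integral>\<^sup>+x. ennreal (\<bar>v x - c0\<bar> powr p) \<partial>M) \<le> ennreal B" .
  show int: "integrable M (\<lambda>x. \<bar>v x - c0\<bar> powr p)"
    using nn by (intro integrableI_bounded) (auto simp: le_less_trans)
  have "ennreal (\<integral>x. \<bar>v x - c0\<bar> powr p \<partial>M) \<le> ennreal B"
    using nn int by (simp add: nn_integral_eq_integral)
  then show "(\<integral>x. \<bar>v x - c0\<bar> powr p \<partial>M) \<le> B"
    using \<open>0 \<le> B\<close> by (simp add: ennreal_le_iff)
qed

lemma abs_diff_mult_measure_Int_le:
  fixes h :: "'a::euclidean_space \<Rightarrow> real"
  assumes "S \<in> lmeasurable" "T \<in> lmeasurable"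
    and "integrable (lebesgue_on S) h" "integrable (lebesgue_on T) h"
  shows "\<bar>a - b\<bar> * measure lebesgue (S \<inter> T)
      \<le> (\<integral>x. \<bar>h x - a\<bar> \<partial>lebesgue_on S) + (\<integral>x. \<bar>h x - b\<bar> \<partial>lebesgue_on T)"
proof -
  interpret S: finite_measure "lebesgue_on S" using assms(1) by (rule finite_measure_lebesgue_on)
  interpret T: finite_measure "lebesgue_on T" using assms(2) by (rule finite_measure_lebesgue_on)
  have [simp]: "S \<in> sets lebesgue" "T \<in> sets lebesgue" "S \<inter> T \<in> lmeasurable"
    using assms(1,2) by auto
  have intS: "integrable lebesgue (\<lambda>x. indicator S x * \<bar>h x - a\<bar>)"
    and intT: "integrable lebesgue (\<lambda>x. indicator T x * \<bar>h x - b\<bar>)"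
  proof -
    have "integrable (lebesgue_on S) (\<lambda>x. \<bar>h x - a\<bar>)" "integrable (lebesgue_on T) (\<lambda>x. \<bar>h x - b\<bar>)"
      using assms(3,4) by auto
    then show "integrable lebesgue (\<lambda>x. indicator S x * \<bar>h x - a\<bar>)"
      "integrable lebesgue (\<lambda>x. indicator T x * \<bar>h x - b\<bar>)"
      by (simp_all add: integrable_restrict_space)
  qed
  have "\<bar>a - b\<bar> * measure lebesgue (S \<inter> T) = (\<integral>x. \<bar>a - b\<bar> * indicator (S \<inter> T) x \<partial>lebesgue)"
    by simp
  also have "\<dots> \<le> (\<integral>x. indicator S x * \<bar>h x - a\<bar> + indicator T x * \<bar>h x - b\<bar> \<partial>lebesgue)"
    using intS intT by (intro integral_mono integrable_real_indicator integrable_mult_right)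
      (use \<open>S \<inter> T \<in> lmeasurable\<close> in \<open>auto simp: indicator_def fmeasurable_def\<close>)
  also have "\<dots> = (\<integral>x. \<bar>h x - a\<bar> \<partial>lebesgue_on S) + (\<integral>x. \<bar>h x - b\<bar> \<partial>lebesgue_on T)"
    using intS intT by (simp add: integral_restrict_space)
  finally show ?thesis .
qed

lemma summable_integral_increments_imp_limit:
  fixes F :: "nat \<Rightarrow> 'b \<Rightarrow> real"
  assumes int: "\<And>n. integrable M (F n)"
    and sum: "summable (\<lambda>k. \<integral>x. \<bar>F (Suc k) x - F k x\<bar> \<partial>M)"
  defines "g \<equiv> \<lambda>x. lim (\<lambda>n. F n x)"
  shows "AE x in M. (\<lambda>n. F n x) \<longlonglongrightarrow> g x"
    and "integrable M g"
    and "(\<lambda>n. \<integral>x. \<bar>F n x - g x\<bar> \<partial>M) \<longlonglongrightarrow> 0"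
proof -
  define d where "d k x = F (Suc k) x - F k x" for k x
  have [measurable]: "F n \<in> borel_measurable M" "d n \<in> borel_measurable M" for n
    using int unfolding d_def by auto
  have int_d: "integrable M (\<lambda>x. \<bar>d k x\<bar>)" for k
    unfolding d_def using int by auto
  have "(\<integral>\<^sup>+x. (\<Sum>k. ennreal \<bar>d k x\<bar>) \<partial>M) = (\<Sum>k. ennreal (\<integral>x. \<bar>d k x\<bar> \<partial>M))"
    by (simp add: nn_integral_suminf nn_integral_eq_integral int_d)
  also have "\<dots> = ennreal (\<Sum>k. \<integral>x. \<bar>d k x\<bar> \<partial>M)"
    using sum unfolding d_def by (intro suminf_ennreal2) auto
  finally have "AE x in M. (\<Sum>k. ennreal \<bar>d k x\<bar>) \<noteq> \<infinity>"
    by (intro nn_integral_PInf_AE) auto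
  then have summable_d: "AE x in M. summable (\<lambda>k. \<bar>d k x\<bar>)"
    by eventually_elim (auto intro: summable_suminf_not_top)
  have telescope: "F n x = F 0 x + (\<Sum>k<n. d k x)" for n x
    by (induction n) (simp_all add: d_def)
  show conv: "AE x in M. (\<lambda>n. F n x) \<longlonglongrightarrow> g x"
    using summable_d
  proof eventually_elim
    case (elim x)
    have "(\<lambda>n. F 0 x + (\<Sum>k<n. d k x)) \<longlonglongrightarrow> F 0 x + (\<Sum>k. d k x)"
      using summable_rabs_cancel[OF elim] by (intro tendsto_add tendsto_const summable_LIMSEQ)
    moreover have "(\<lambda>n. F n x) = (\<lambda>n. F 0 x + (\<Sum>k<n. d k x))"
      using telescope by blast
    ultimately have "convergent (\<lambda>n. F n x)"
      unfolding convergent_def by metis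
    then show ?case
      unfolding g_def by (simp add: convergent_LIMSEQ_iff)
  qed
  define w where "w x = \<bar>F 0 x\<bar> + (\<Sum>k. \<bar>d k x\<bar>)" for x
  have int_w: "integrable M w"
    unfolding w_def using int int_d summable_d sum
    by (intro Bochner_Integration.integrable_add integrable_suminf) (auto simp: d_def)
  have dominated: "AE x in M. \<bar>F n x\<bar> \<le> w x" for n
    using summable_d
  proof eventually_elim
    case (elim x)
    have "\<bar>F n x\<bar> \<le> \<bar>F 0 x\<bar> + (\<Sum>k<n. \<bar>d k x\<bar>)"
      using abs_triangle_ineq[of "F 0 x" "\<Sum>k<n. d k x"] sum_abs[of "\<lambda>k. d k x" "{..<n}"]
      unfolding telescope[of n x] by linarith
    also have "(\<Sum>k<n. \<bar>d k x\<bar>) \<le> (\<Sum>k. \<bar>d k x\<bar>)"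
      using elim by (intro sum_le_suminf) auto
    finally show ?case unfolding w_def by simp
  qed
  have [measurable]: "g \<in> borel_measurable M"
    unfolding g_def by measurable
  show int_g: "integrable M g"
    using dominated by (intro integrable_dominated_convergence[OF _ _ int_w conv]) auto
  have "(\<lambda>n. \<integral>x. \<bar>F n x - g x\<bar> \<partial>M) \<longlonglongrightarrow> (\<integral>x. 0 \<partial>M)"
  proof (rule integral_dominated_convergence[where w="\<lambda>x. w x + \<bar>g x\<bar>"])
    show "AE x in M. (\<lambda>n. \<bar>F n x - g x\<bar>) \<longlonglongrightarrow> 0"
      using conv by eventually_elim (simp add: LIM_zero tendsto_rabs_zero)
    show "AE x in M. norm \<bar>F n x - g x\<bar> \<le> w x + \<bar>g x\<bar>" for n
      using dominated[of n] by eventually_elim auto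
  qed (use int_w int_g in auto)
  then show "(\<lambda>n. \<integral>x. \<bar>F n x - g x\<bar> \<partial>M) \<longlonglongrightarrow> 0" by simp
qed

section \<open>Connectedness and fast Cauchy subsequences\<close>

lemma connected_open_cover_propagate:
  assumes "connected \<Omega>" and cover: "\<Union>\<S> = \<Omega>"
    and nonempty_open: "\<And>S. S \<in> \<S> \<Longrightarrow> open S \<and> S \<noteq> {}"
    and "R \<in> \<S>" "P R"
    and step: "\<And>S T. S \<in> \<S> \<Longrightarrow> T \<in> \<S> \<Longrightarrow> S \<inter> T \<noteq> {} \<Longrightarrow> P S \<Longrightarrow> P T"
    and "T \<in> \<S>"
  shows "P T"
proof (rule ccontr)
  assume "\<not> P T"
  define U where "U = \<Union>{S\<in>\<S>. P S}"
  define V where "V = \<Union>{S\<in>\<S>. \<not> P S}"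
  have "open U" "open V"
    unfolding U_def V_def using nonempty_open by auto
  moreover have "U \<inter> V \<inter> \<Omega> = {}"
    unfolding U_def V_def using step by blast
  moreover have "\<Omega> \<subseteq> U \<union> V"
    unfolding U_def V_def using cover by blast
  ultimately have "U \<inter> \<Omega> = {} \<or> V \<inter> \<Omega> = {}"
    using connectedD[OF \<open>connected \<Omega>\<close>] by blast
  moreover have "R \<subseteq> U \<inter> \<Omega>" "T \<subseteq> V \<inter> \<Omega>"
    unfolding U_def V_def using cover \<open>R \<in> \<S>\<close> \<open>P R\<close> \<open>T \<in> \<S>\<close> \<open>\<not> P T\<close> by auto
  ultimately show False
    using nonempty_open[OF \<open>R \<in> \<S>\<close>] nonempty_open[OF \<open>T \<in> \<S>\<close>] by blast
qed

lemma Cauchy_subseq_geometric: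
  fixes d :: "nat \<Rightarrow> nat \<Rightarrow> real"
  assumes "\<forall>\<epsilon>>0. \<exists>N. \<forall>i\<ge>N. \<forall>j\<ge>N. d i j < \<epsilon>"
  obtains \<phi> where "strict_mono \<phi>" "\<And>k. d (\<phi> (Suc k)) (\<phi> k) < (1/2) ^ k"
proof -
  have "\<forall>k. \<exists>N. \<forall>i\<ge>N. \<forall>j\<ge>N. d i j < (1/2) ^ k"
    using assms by simp
  then obtain N where N: "\<And>k i j. i \<ge> N k \<Longrightarrow> j \<ge> N k \<Longrightarrow> d i j < (1/2) ^ k"
    by metis
  define \<phi> where "\<phi> k = (\<Sum>j\<le>k. N j) + k" for k
  have "strict_mono \<phi>"
    unfolding \<phi>_def by (rule strict_monoI_Suc) simp
  moreover have "N k \<le> \<phi> k" "N k \<le> \<phi> (Suc k)" for k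
    unfolding \<phi>_def using member_le_sum[of k "{..k}" N] member_le_sum[of k "{..Suc k}" N] by auto
  ultimately show ?thesis
    using N that by blast
qed

lemma shape_lmeasurable:
  assumes "shape S"
  shows "S \<in> lmeasurable"
proof -
  have "S \<in> sets lebesgue"
    using assms unfolding shape_def by (simp add: borel_open)
  then show ?thesis
    using assms unfolding shape_def by (blast intro: fmeasurableI)
qed

lemma shape_measure_pos:
  assumes "shape S"
  shows "0 < measure lebesgue S"
proof -
  have "0 < emeasure lebesgue S" "emeasure lebesgue S < \<infinity>"
    using assms by (simp_all only: shape_def)
  then show ?thesis
    by (simp add: measure_def enn2real_positive_iff)
qed

lemma shape_nonempty: "shape S \<Longrightarrow> S \<noteq> {}"
  using shape_measure_pos by fastforce

lemma shape_Int_measure_pos: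
  assumes "shape S" "shape T" "S \<inter> T \<noteq> {}"
  shows "0 < measure lebesgue (S \<inter> T)"
proof -
  have "S \<inter> T \<in> lmeasurable" "open (S \<inter> T)"
    using assms shape_lmeasurable by (auto simp: shape_def)
  then show ?thesis
    using open_not_negligible[OF _ \<open>S \<inter> T \<noteq> {}\<close>] negligible_iff_measure0
    by (metis measure_nonneg order_le_less)
qed

lemma measure_lebesgue_on_space: "shape S \<Longrightarrow> measure (lebesgue_on S) S = measure lebesgue S"
  by (intro measure_restrict_space) (auto dest: shape_lmeasurable)

lemma set_integrable_iff_integrable_lebesgue_on:
  "S \<in> sets lebesgue \<Longrightarrow> set_integrable lebesgue S f \<longleftrightarrow> integrable (lebesgue_on S) (f :: _ \<Rightarrow> real)"
  by (simp add: set_integrable_def integrable_restrict_space)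

lemma avg_eq_integral_lebesgue_on:
  "S \<in> sets lebesgue \<Longrightarrow> avg S f = integral\<^sup>L (lebesgue_on S) f / measure lebesgue S"
  by (simp add: avg_def set_lebesgue_integral_def integral_restrict_space)

lemma osc_le_iff:
  assumes "shape S" "0 < p" "0 \<le> K"
  shows "osc p S f \<le> K
    \<longleftrightarrow> (\<integral>x. \<bar>f x - avg S f\<bar> powr p \<partial>lebesgue_on S) \<le> measure lebesgue S * K powr p"
proof -
  define I where "I = (\<integral>x. \<bar>f x - avg S f\<bar> powr p \<partial>lebesgue_on S)"
  have "S \<in> sets lebesgue" "0 < measure lebesgue S"
    using assms(1) shape_lmeasurable shape_measure_pos by auto
  then have osc_eq: "osc p S f = (I / measure lebesgue S) powr (1/p)"
    by (simp add: osc_def I_def set_lebesgue_integral_def integral_restrict_space)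
  have "0 \<le> I"
    unfolding I_def by (simp add: Bochner_Integration.integral_nonneg)
  then have "(I / measure lebesgue S) powr (1/p) \<le> K \<longleftrightarrow> I / measure lebesgue S \<le> K powr p"
    using assms \<open>0 < measure lebesgue S\<close> by (intro powr_inverse_le_iff) auto
  also have "\<dots> \<longleftrightarrow> I \<le> measure lebesgue S * K powr p"
    using \<open>0 < measure lebesgue S\<close> by (simp add: pos_divide_le_eq mult.commute)
  finally show ?thesis
    unfolding osc_eq I_def .
qed

lemma avg_diff:
  assumes "S \<in> sets lebesgue" "integrable (lebesgue_on S) u" "integrable (lebesgue_on S) w"
  shows "avg S (\<lambda>x. u x - w x) = avg S u - avg S w"
  using assms by (simp add: avg_eq_integral_lebesgue_on diff_divide_distrib)

lemma avg_add_const: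
  assumes "shape S" "integrable (lebesgue_on S) u"
  shows "avg S (\<lambda>x. u x + c) = avg S u + c"
proof -
  interpret finite_measure "lebesgue_on S"
    using shape_lmeasurable[OF assms(1)] by (rule finite_measure_lebesgue_on)
  have "integral\<^sup>L (lebesgue_on S) (\<lambda>x. u x + c) = integral\<^sup>L (lebesgue_on S) u + c * measure lebesgue S"
    using assms by (simp add: measure_lebesgue_on_space)
  then show ?thesis
    using shape_lmeasurable[OF assms(1)] shape_measure_pos[OF assms(1)]
    by (simp add: avg_eq_integral_lebesgue_on add_divide_distrib)
qed

section \<open>The BMO seminorm\<close>

lemma BMO_integrable:
  assumes "f \<in> BMO p \<S>" "S \<in> \<S>" "shape S"
  shows "integrable (lebesgue_on S) f"
    and "integrable (lebesgue_on S) (\<lambda>x. \<bar>f x - avg S f\<bar> powr p)"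
  using assms shape_lmeasurable[OF assms(3)]
  by (auto simp: BMO_def set_integrable_iff_integrable_lebesgue_on)

lemma osc_le_bmo_norm: "f \<in> BMO p \<S> \<Longrightarrow> S \<in> \<S> \<Longrightarrow> osc p S f \<le> bmo_norm p \<S> f"
  unfolding bmo_norm_def BMO_def by (intro cInf_greatest) auto

lemma bmo_norm_nonneg: "f \<in> BMO p \<S> \<Longrightarrow> 0 \<le> bmo_norm p \<S> f"
  unfolding bmo_norm_def BMO_def by (intro cInf_greatest) auto

lemma bmo_norm_le: "0 \<le> K \<Longrightarrow> \<forall>S\<in>\<S>. osc p S f \<le> K \<Longrightarrow> bmo_norm p \<S> f \<le> K"
  unfolding bmo_norm_def by (intro cInf_lower) (auto simp: bdd_below_def)

lemma integral_deviation_powr_le_bmo_norm: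
  assumes "f \<in> BMO p \<S>" "S \<in> \<S>" "shape S" "0 < p"
  shows "(\<integral>x. \<bar>f x - avg S f\<bar> powr p \<partial>lebesgue_on S) \<le> measure lebesgue S * bmo_norm p \<S> f powr p"
  using osc_le_iff[OF \<open>shape S\<close> \<open>0 < p\<close> bmo_norm_nonneg] osc_le_bmo_norm assms by blast

lemma BMO_bmo_norm_leI:
  assumes "\<forall>S\<in>\<S>. shape S" "0 < p" "0 \<le> K"
    and "\<And>S. S \<in> \<S> \<Longrightarrow> integrable (lebesgue_on S) f
      \<and> integrable (lebesgue_on S) (\<lambda>x. \<bar>f x - avg S f\<bar> powr p)
      \<and> (\<integral>x. \<bar>f x - avg S f\<bar> powr p \<partial>lebesgue_on S) \<le> measure lebesgue S * K powr p"
  shows "f \<in> BMO p \<S>" and "bmo_norm p \<S> f \<le> K"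
proof -
  have osc_le: "\<forall>S\<in>\<S>. osc p S f \<le> K"
    using assms osc_le_iff by blast
  moreover have "set_integrable lebesgue S f \<and> set_integrable lebesgue S (\<lambda>x. \<bar>f x - avg S f\<bar> powr p)"
    if "S \<in> \<S>" for S
    using assms(4)[OF that] assms(1) that shape_lmeasurable fmeasurableD
      set_integrable_iff_integrable_lebesgue_on by metis
  ultimately show "f \<in> BMO p \<S>"
    using \<open>0 \<le> K\<close> unfolding BMO_def by blast
  show "bmo_norm p \<S> f \<le> K"
    using bmo_norm_le[OF \<open>0 \<le> K\<close> osc_le] .
qed

lemma BMO_diff:
  assumes shapes: "\<forall>S\<in>\<S>. shape S" and "0 < p" and u: "u \<in> BMO p \<S>" and w: "w \<in> BMO p \<S>"
  shows "(\<lambda>x. u x - w x) \<in> BMO p \<S>"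
proof -
  define K where "K = (2 powr p * (bmo_norm p \<S> u powr p + bmo_norm p \<S> w powr p)) powr (1/p)"
  have "0 \<le> K"
    unfolding K_def by simp
  moreover have "integrable (lebesgue_on S) (\<lambda>x. u x - w x)
      \<and> integrable (lebesgue_on S) (\<lambda>x. \<bar>(u x - w x) - avg S (\<lambda>x. u x - w x)\<bar> powr p)
      \<and> (\<integral>x. \<bar>(u x - w x) - avg S (\<lambda>x. u x - w x)\<bar> powr p \<partial>lebesgue_on S)
        \<le> measure lebesgue S * K powr p" if "S \<in> \<S>" for S
  proof -
    have "shape S"
      using shapes that by blast
    note u_int = BMO_integrable[OF u that \<open>shape S\<close>]
    note w_int = BMO_integrable[OF w that \<open>shape S\<close>]
    have avg: "avg S (\<lambda>x. u x - w x) = avg S u - avg S w"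
      using avg_diff[OF fmeasurableD[OF shape_lmeasurable[OF \<open>shape S\<close>]] u_int(1) w_int(1)] .
    note quasi = integral_abs_diff_powr_le[OF \<open>0 < p\<close> u_int(2) w_int(2)
        borel_measurable_integrable[OF u_int(1)] borel_measurable_integrable[OF w_int(1)]]
    have "(\<integral>x. \<bar>(u x - w x) - avg S (\<lambda>x. u x - w x)\<bar> powr p \<partial>lebesgue_on S)
        \<le> 2 powr p * ((\<integral>x. \<bar>u x - avg S u\<bar> powr p \<partial>lebesgue_on S) + (\<integral>x. \<bar>w x - avg S w\<bar> powr p \<partial>lebesgue_on S))"
      unfolding avg by (rule quasi(2))
    also have "\<dots> \<le> 2 powr p * (measure lebesgue S * bmo_norm p \<S> u powr p + measure lebesgue S * bmo_norm p \<S> w powr p)"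
      using integral_deviation_powr_le_bmo_norm[OF u that \<open>shape S\<close> \<open>0 < p\<close>]
        integral_deviation_powr_le_bmo_norm[OF w that \<open>shape S\<close> \<open>0 < p\<close>]
      by (intro mult_left_mono add_mono) auto
    also have "\<dots> = measure lebesgue S * K powr p"
      unfolding K_def using \<open>0 < p\<close> by (simp add: powr_powr algebra_simps)
    finally show ?thesis
      using quasi(1) u_int(1) w_int(1) unfolding avg by auto
  qed
  ultimately show ?thesis
    using BMO_bmo_norm_leI(1)[OF shapes \<open>0 < p\<close>] by blast
qed

lemma BMO_add_const:
  assumes shapes: "\<forall>S\<in>\<S>. shape S" and "0 < p" and "f \<in> BMO p \<S>"
  shows "(\<lambda>x. f x + c) \<in> BMO p \<S>" and "bmo_norm p \<S> (\<lambda>x. f x + c) = bmo_norm p \<S> f"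
proof -
  have deviation: "(\<lambda>x. \<bar>(f x + c) - avg S (\<lambda>x. f x + c)\<bar> powr p) = (\<lambda>x. \<bar>f x - avg S f\<bar> powr p)"
    if "S \<in> \<S>" for S
  proof -
    have "avg S (\<lambda>x. f x + c) = avg S f + c"
      using avg_add_const BMO_integrable(1)[OF \<open>f \<in> BMO p \<S>\<close>] shapes that by blast
    then show ?thesis by simp
  qed
  have "integrable (lebesgue_on S) (\<lambda>x. f x + c)" if "S \<in> \<S>" for S
  proof -
    interpret finite_measure "lebesgue_on S"
      using shapes that shape_lmeasurable finite_measure_lebesgue_on by blast
    show ?thesis
      using BMO_integrable(1)[OF \<open>f \<in> BMO p \<S>\<close> that] shapes that by auto
  qed
  then show "(\<lambda>x. f x + c) \<in> BMO p \<S>"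
    using BMO_bmo_norm_leI(1)[OF shapes \<open>0 < p\<close> bmo_norm_nonneg[OF \<open>f \<in> BMO p \<S>\<close>]]
      deviation BMO_integrable(2)[OF \<open>f \<in> BMO p \<S>\<close>] shapes
      integral_deviation_powr_le_bmo_norm[OF \<open>f \<in> BMO p \<S>\<close> _ _ \<open>0 < p\<close>]
    by simp
  have "osc p S (\<lambda>x. f x + c) = osc p S f" if "S \<in> \<S>" for S
    unfolding osc_def deviation[OF that] ..
  then show "bmo_norm p \<S> (\<lambda>x. f x + c) = bmo_norm p \<S> f"
    unfolding bmo_norm_def by metis
qed

lemma integral_deviation_le_bmo_norm:
  assumes "f \<in> BMO p \<S>" "S \<in> \<S>" "shape S" "1 \<le> p"
  shows "(\<integral>x. \<bar>f x - avg S f\<bar> \<partial>lebesgue_on S) \<le> 2 * measure lebesgue S * bmo_norm p \<S> f"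
proof (rule dense_ge)
  interpret finite_measure "lebesgue_on S"
    using shape_lmeasurable[OF \<open>shape S\<close>] by (rule finite_measure_lebesgue_on)
  have "0 < measure lebesgue S"
    using shape_measure_pos[OF \<open>shape S\<close>] .
  fix y assume y: "2 * measure lebesgue S * bmo_norm p \<S> f < y"
  define e where "e = y / (2 * measure lebesgue S)"
  have "bmo_norm p \<S> f < e"
    using y \<open>0 < measure lebesgue S\<close> by (simp add: e_def pos_less_divide_eq mult.commute)
  moreover have "0 \<le> bmo_norm p \<S> f"
    using bmo_norm_nonneg[OF \<open>f \<in> BMO p \<S>\<close>] .
  ultimately have "0 < e" "bmo_norm p \<S> f powr p \<le> e powr p"
    using \<open>1 \<le> p\<close> by (auto intro: powr_mono2)
  then have "measure lebesgue S * bmo_norm p \<S> f powr p \<le> measure lebesgue S * e powr p"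
    using \<open>0 < measure lebesgue S\<close> by (intro mult_left_mono) auto
  then have "(\<integral>x. \<bar>f x - avg S f\<bar> powr p \<partial>lebesgue_on S) \<le> measure lebesgue S * e powr p"
    using \<open>1 \<le> p\<close> by (intro order_trans[OF integral_deviation_powr_le_bmo_norm[OF assms(1-3)]]) auto
  then have "(\<integral>x. \<bar>f x - avg S f\<bar> \<partial>lebesgue_on S) \<le> 2 * e * measure lebesgue S"
    using integral_abs_le_of_integral_powr_le[OF \<open>1 \<le> p\<close> \<open>0 < e\<close>] BMO_integrable[OF assms(1-3)]
      measure_lebesgue_on_space[OF \<open>shape S\<close>]
    by auto
  also have "\<dots> = y"
    using \<open>0 < measure lebesgue S\<close> by (simp add: e_def)
  finally show "(\<integral>x. \<bar>f x - avg S f\<bar> \<partial>lebesgue_on S) \<le> y" .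
qed

section \<open>Completeness\<close>

lemma avg_diff_le_bmo_norm_overlap:
  assumes shapes: "\<forall>S\<in>\<S>. shape S" and "1 \<le> p" and "S \<in> \<S>" "T \<in> \<S>" "h \<in> BMO p \<S>"
  shows "\<bar>avg S h - avg T h\<bar> * measure lebesgue (S \<inter> T)
    \<le> 2 * (measure lebesgue S + measure lebesgue T) * bmo_norm p \<S> h"
proof -
  have "shape S" "shape T"
    using shapes \<open>S \<in> \<S>\<close> \<open>T \<in> \<S>\<close> by auto
  then show ?thesis
    using abs_diff_mult_measure_Int_le[OF shape_lmeasurable[OF \<open>shape S\<close>] shape_lmeasurable[OF \<open>shape T\<close>]
        BMO_integrable(1)[OF \<open>h \<in> BMO p \<S>\<close> \<open>S \<in> \<S>\<close> \<open>shape S\<close>]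
        BMO_integrable(1)[OF \<open>h \<in> BMO p \<S>\<close> \<open>T \<in> \<S>\<close> \<open>shape T\<close>],
        where a = "avg S h" and b = "avg T h"]
      integral_deviation_le_bmo_norm[OF \<open>h \<in> BMO p \<S>\<close> \<open>S \<in> \<S>\<close> \<open>shape S\<close> \<open>1 \<le> p\<close>]
      integral_deviation_le_bmo_norm[OF \<open>h \<in> BMO p \<S>\<close> \<open>T \<in> \<S>\<close> \<open>shape T\<close> \<open>1 \<le> p\<close>]
    by (simp add: algebra_simps)
qed

lemma avg_diff_le_bmo_norm:
  assumes "domain \<Omega>" "basis_of_shapes \<S> \<Omega>" "1 \<le> p" "S \<in> \<S>" "T \<in> \<S>"
  obtains C where "0 \<le> C" "\<And>h. h \<in> BMO p \<S> \<Longrightarrow> \<bar>avg T h - avg S h\<bar> \<le> C * bmo_norm p \<S> h"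
proof -
  have shapes: "\<forall>S\<in>\<S>. shape S" and cover: "\<Union>\<S> = \<Omega>"
    using assms(2) by (auto simp: basis_of_shapes_def)
  define bounded_from_S where
    "bounded_from_S T \<longleftrightarrow> (\<exists>C\<ge>0. \<forall>h\<in>BMO p \<S>. \<bar>avg T h - avg S h\<bar> \<le> C * bmo_norm p \<S> h)" for T
  have step: "bounded_from_S T'"
    if "S' \<in> \<S>" "T' \<in> \<S>" "S' \<inter> T' \<noteq> {}" "bounded_from_S S'" for S' T'
  proof -
    obtain C where "0 \<le> C" and C: "\<And>h. h \<in> BMO p \<S> \<Longrightarrow> \<bar>avg S' h - avg S h\<bar> \<le> C * bmo_norm p \<S> h"
      using \<open>bounded_from_S S'\<close> unfolding bounded_from_S_def by blast
    define I where "I = measure lebesgue (S' \<inter> T')"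
    have "0 < I"
      unfolding I_def using shapes that shape_Int_measure_pos by blast
    define D where "D = C + 2 * (measure lebesgue S' + measure lebesgue T') / I"
    have "\<bar>avg T' h - avg S h\<bar> \<le> D * bmo_norm p \<S> h" if "h \<in> BMO p \<S>" for h
    proof -
      have "\<bar>avg S' h - avg T' h\<bar> \<le> 2 * (measure lebesgue S' + measure lebesgue T') / I * bmo_norm p \<S> h"
        using avg_diff_le_bmo_norm_overlap[OF shapes \<open>1 \<le> p\<close> \<open>S' \<in> \<S>\<close> \<open>T' \<in> \<S>\<close> that] \<open>0 < I\<close>
        unfolding I_def by (simp add: pos_le_divide_eq field_simps)
      then show ?thesis
        using C[OF that] unfolding D_def by (simp add: distrib_right)
    qed
    moreover have "0 \<le> D"
      unfolding D_def using \<open>0 \<le> C\<close> \<open>0 < I\<close> by simp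
    ultimately show ?thesis
      unfolding bounded_from_S_def by blast
  qed
  have "bounded_from_S T"
  proof (rule connected_open_cover_propagate[where P = bounded_from_S and R = S, OF _ cover])
    show "connected \<Omega>"
      using assms(1) by (simp add: domain_def)
    show "open S' \<and> S' \<noteq> {}" if "S' \<in> \<S>" for S'
      using shapes that shape_nonempty by (auto simp: shape_def)
    show "bounded_from_S S"
      unfolding bounded_from_S_def by (intro exI[of _ 0]) simp
  qed (use step \<open>S \<in> \<S>\<close> \<open>T \<in> \<S>\<close> in auto)
  then show ?thesis
    using that unfolding bounded_from_S_def by blast
qed

lemma integral_abs_diff_avg_le_bmo_norm:
  assumes "domain \<Omega>" "basis_of_shapes \<S> \<Omega>" "1 \<le> p" "S \<in> \<S>" "T \<in> \<S>"
  obtains C where "0 \<le> C"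
    "\<And>h. h \<in> BMO p \<S> \<Longrightarrow> (\<integral>x. \<bar>h x - avg S h\<bar> \<partial>lebesgue_on T) \<le> C * bmo_norm p \<S> h"
proof -
  obtain C where "0 \<le> C" and C: "\<And>h. h \<in> BMO p \<S> \<Longrightarrow> \<bar>avg T h - avg S h\<bar> \<le> C * bmo_norm p \<S> h"
    using avg_diff_le_bmo_norm[OF assms] by blast
  have "shape T"
    using assms(2,5) by (auto simp: basis_of_shapes_def)
  interpret finite_measure "lebesgue_on T"
    using shape_lmeasurable[OF \<open>shape T\<close>] by (rule finite_measure_lebesgue_on)
  have "(\<integral>x. \<bar>h x - avg S h\<bar> \<partial>lebesgue_on T) \<le> (2 + C) * measure lebesgue T * bmo_norm p \<S> h"
    if "h \<in> BMO p \<S>" for h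
  proof -
    note h_int = BMO_integrable(1)[OF that \<open>T \<in> \<S>\<close> \<open>shape T\<close>]
    have "(\<integral>x. \<bar>h x - avg S h\<bar> \<partial>lebesgue_on T)
        \<le> (\<integral>x. \<bar>h x - avg T h\<bar> + \<bar>avg T h - avg S h\<bar> \<partial>lebesgue_on T)"
      using h_int by (intro integral_mono) auto
    also have "\<dots> = (\<integral>x. \<bar>h x - avg T h\<bar> \<partial>lebesgue_on T) + measure lebesgue T * \<bar>avg T h - avg S h\<bar>"
      using h_int measure_lebesgue_on_space[OF \<open>shape T\<close>] by simp
    also have "\<dots> \<le> 2 * measure lebesgue T * bmo_norm p \<S> h + measure lebesgue T * (C * bmo_norm p \<S> h)"
      using integral_deviation_le_bmo_norm[OF that \<open>T \<in> \<S>\<close> \<open>shape T\<close> \<open>1 \<le> p\<close>]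
        C[OF that] shape_measure_pos[OF \<open>shape T\<close>]
      by (intro add_mono mult_left_mono) auto
    finally show ?thesis
      by (simp add: algebra_simps)
  qed
  moreover have "0 \<le> (2 + C) * measure lebesgue T"
    using \<open>0 \<le> C\<close> by simp
  ultimately show ?thesis
    using that by blast
qed

definition converges_ae_L1 :: "'a::euclidean_space set set \<Rightarrow> (nat \<Rightarrow> 'a \<Rightarrow> real) \<Rightarrow> ('a \<Rightarrow> real) \<Rightarrow> bool"
  where "converges_ae_L1 \<S> s v \<longleftrightarrow> (\<forall>T\<in>\<S>. integrable (lebesgue_on T) v
    \<and> (AE x in lebesgue_on T. (\<lambda>n. s n x) \<longlonglongrightarrow> v x)
    \<and> (\<lambda>n. \<integral>x. \<bar>s n x - v x\<bar> \<partial>lebesgue_on T) \<longlonglongrightarrow> 0)"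

lemma converges_ae_L1_diff:
  assumes "converges_ae_L1 \<S> s v" "\<And>T. T \<in> \<S> \<Longrightarrow> integrable (lebesgue_on T) u"
  shows "converges_ae_L1 \<S> (\<lambda>n x. u x - s n x) (\<lambda>x. u x - v x)"
  using assms unfolding converges_ae_L1_def
  by (fastforce intro: tendsto_diff elim: eventually_mono simp: abs_minus_commute)

lemma BMO_limit_bmo_norm_le:
  assumes shapes: "\<forall>S\<in>\<S>. shape S" and "0 < p"
    and BMO: "\<And>n. s n \<in> BMO p \<S>" and small: "\<And>n. N \<le> n \<Longrightarrow> bmo_norm p \<S> (s n) \<le> \<epsilon>"
    and conv: "converges_ae_L1 \<S> s v"
  shows "v \<in> BMO p \<S>" and "bmo_norm p \<S> v \<le> \<epsilon>"
proof -
  have "0 \<le> \<epsilon>"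
    using bmo_norm_nonneg[OF BMO] small[of N] by (meson order_trans order_refl)
  have "integrable (lebesgue_on T) (\<lambda>x. \<bar>v x - avg T v\<bar> powr p)
      \<and> (\<integral>x. \<bar>v x - avg T v\<bar> powr p \<partial>lebesgue_on T) \<le> measure lebesgue T * \<epsilon> powr p"
    if "T \<in> \<S>" for T
  proof -
    have "shape T" "T \<in> sets lebesgue"
      using shapes that shape_lmeasurable by auto
    have int_v: "integrable (lebesgue_on T) v"
      and ae: "AE x in lebesgue_on T. (\<lambda>n. s n x) \<longlonglongrightarrow> v x"
      and L1: "(\<lambda>n. \<integral>x. \<bar>s n x - v x\<bar> \<partial>lebesgue_on T) \<longlonglongrightarrow> 0"
      using conv that unfolding converges_ae_L1_def by auto
    have int_s: "integrable (lebesgue_on T) (s n)" for n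
      using BMO_integrable(1)[OF BMO that \<open>shape T\<close>] .
    have "(\<lambda>n. integral\<^sup>L (lebesgue_on T) (s n) - integral\<^sup>L (lebesgue_on T) v) \<longlonglongrightarrow> 0"
    proof (rule Lim_null_comparison[OF _ L1])
      show "\<forall>\<^sub>F n in sequentially. norm (integral\<^sup>L (lebesgue_on T) (s n) - integral\<^sup>L (lebesgue_on T) v)
          \<le> (\<integral>x. \<bar>s n x - v x\<bar> \<partial>lebesgue_on T)"
        using int_s int_v by (simp add: integral_abs_bound flip: Bochner_Integration.integral_diff)
    qed
    then have "(\<lambda>n. avg T (s n)) \<longlonglongrightarrow> avg T v"
      unfolding avg_eq_integral_lebesgue_on[OF \<open>T \<in> sets lebesgue\<close>]
      using shape_measure_pos[OF \<open>shape T\<close>]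
      by (intro tendsto_divide tendsto_const) (auto simp: LIM_zero_iff)
    moreover have "integrable (lebesgue_on T) (\<lambda>x. \<bar>s n x - avg T (s n)\<bar> powr p)
        \<and> (\<integral>x. \<bar>s n x - avg T (s n)\<bar> powr p \<partial>lebesgue_on T) \<le> measure lebesgue T * \<epsilon> powr p"
      if "N \<le> n" for n
      using BMO_integrable(2)[OF BMO \<open>T \<in> \<S>\<close> \<open>shape T\<close>]
        integral_deviation_powr_le_bmo_norm[OF BMO \<open>T \<in> \<S>\<close> \<open>shape T\<close> \<open>0 < p\<close>]
        powr_mono2[OF _ bmo_norm_nonneg[OF BMO] small[OF that], of p] \<open>0 < p\<close>
        shape_measure_pos[OF \<open>shape T\<close>]
      by (meson less_imp_le mult_left_mono order_trans)
    ultimately show ?thesis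
      using integral_abs_powr_le_of_AE_limit[OF \<open>0 < p\<close> _ _ _ ae] int_s int_v
        shape_measure_pos[OF \<open>shape T\<close>]
      by (metis borel_measurable_integrable measure_nonneg powr_ge_zero zero_le_mult_iff)
  qed
  then show "v \<in> BMO p \<S>" and "bmo_norm p \<S> v \<le> \<epsilon>"
    using BMO_bmo_norm_leI[OF shapes \<open>0 < p\<close> \<open>0 \<le> \<epsilon>\<close>] conv unfolding converges_ae_L1_def by blast+
qed

lemma BMO_fast_Cauchy_converges:
  assumes "domain \<Omega>" "basis_of_shapes \<S> \<Omega>" "1 \<le> p"
    and BMO: "\<And>k. u k \<in> BMO p \<S>"
    and fast: "\<And>k. bmo_norm p \<S> (\<lambda>x. u (Suc k) x - u k x) \<le> (1/2) ^ k"
  obtains A g where "converges_ae_L1 \<S> (\<lambda>k x. u k x - A k) g"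
proof -
  have shapes: "\<forall>S\<in>\<S>. shape S"
    using assms(2) by (simp add: basis_of_shapes_def)
  define S\<^sub>0 where "S\<^sub>0 = (SOME S. S \<in> \<S>)"
    \<comment> \<open>meaningless if \<open>\<S>\<close> is empty, but then there is nothing to prove\<close>
  define F where "F k x = u k x - avg S\<^sub>0 (u k)" for k x
  have "converges_ae_L1 \<S> F (\<lambda>x. lim (\<lambda>k. F k x))"
    unfolding converges_ae_L1_def
  proof
    fix T assume "T \<in> \<S>"
    then have "S\<^sub>0 \<in> \<S>"
      unfolding S\<^sub>0_def by (rule someI)
    have "shape T" "shape S\<^sub>0"
      using shapes \<open>T \<in> \<S>\<close> \<open>S\<^sub>0 \<in> \<S>\<close> by auto
    obtain C where "0 \<le> C"
      and C: "\<And>h. h \<in> BMO p \<S> \<Longrightarrow> (\<integral>x. \<bar>h x - avg S\<^sub>0 h\<bar> \<partial>lebesgue_on T) \<le> C * bmo_norm p \<S> h"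
      using integral_abs_diff_avg_le_bmo_norm[OF assms(1-3) \<open>S\<^sub>0 \<in> \<S>\<close> \<open>T \<in> \<S>\<close>] by blast
    interpret finite_measure "lebesgue_on T"
      using shape_lmeasurable[OF \<open>shape T\<close>] by (rule finite_measure_lebesgue_on)
    have int_F: "integrable (lebesgue_on T) (F k)" for k
      unfolding F_def using BMO_integrable(1)[OF BMO \<open>T \<in> \<S>\<close> \<open>shape T\<close>] by simp
    have increment: "(\<integral>x. \<bar>F (Suc k) x - F k x\<bar> \<partial>lebesgue_on T) \<le> C * (1/2) ^ k" for k
    proof -
      define h where "h x = u (Suc k) x - u k x" for x
      have "h \<in> BMO p \<S>"
        unfolding h_def using BMO_diff[OF shapes _ BMO BMO] \<open>1 \<le> p\<close> by simp
      have avg_h: "avg S\<^sub>0 h = avg S\<^sub>0 (u (Suc k)) - avg S\<^sub>0 (u k)"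
        unfolding h_def using avg_diff fmeasurableD[OF shape_lmeasurable[OF \<open>shape S\<^sub>0\<close>]]
          BMO_integrable(1)[OF BMO \<open>S\<^sub>0 \<in> \<S>\<close> \<open>shape S\<^sub>0\<close>] by metis
      have increment_eq: "F (Suc k) x - F k x = h x - avg S\<^sub>0 h" for x
        unfolding F_def avg_h by (simp add: h_def)
      have "(\<integral>x. \<bar>F (Suc k) x - F k x\<bar> \<partial>lebesgue_on T) = (\<integral>x. \<bar>h x - avg S\<^sub>0 h\<bar> \<partial>lebesgue_on T)"
        by (simp only: increment_eq)
      also have "\<dots> \<le> C * (1/2) ^ k"
        using C[OF \<open>h \<in> BMO p \<S>\<close>] fast[of k] \<open>0 \<le> C\<close> unfolding h_def
        by (meson mult_left_mono order_trans)
      finally show ?thesis .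
    qed
    have "summable (\<lambda>k. \<integral>x. \<bar>F (Suc k) x - F k x\<bar> \<partial>lebesgue_on T)"
    proof (rule summable_comparison_test')
      show "summable (\<lambda>k. C * (1/2::real) ^ k)"
        by (intro summable_mult summable_geometric) simp
      show "norm (\<integral>x. \<bar>F (Suc k) x - F k x\<bar> \<partial>lebesgue_on T) \<le> C * (1/2) ^ k" for k
        using increment[of k] by simp
    qed
    then show "integrable (lebesgue_on T) (\<lambda>x. lim (\<lambda>k. F k x))
        \<and> (AE x in lebesgue_on T. (\<lambda>k. F k x) \<longlonglongrightarrow> lim (\<lambda>k. F k x))
        \<and> (\<lambda>k. \<integral>x. \<bar>F k x - lim (\<lambda>k. F k x)\<bar> \<partial>lebesgue_on T) \<longlonglongrightarrow> 0"
      using summable_integral_increments_imp_limit[OF int_F] by (intro conjI)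
  qed
  then show ?thesis
    unfolding F_def by (rule that)
qed

lemma BMO_Cauchy_subseq_limit_close:
  fixes f :: "nat \<Rightarrow> 'a::euclidean_space \<Rightarrow> real" and \<phi> :: "nat \<Rightarrow> nat"
  assumes shapes: "\<forall>S\<in>\<S>. shape S" and "0 < p" and BMO: "\<And>i. f i \<in> BMO p \<S>"
    and "strict_mono \<phi>" and conv: "converges_ae_L1 \<S> (\<lambda>k x. f (\<phi> k) x - A k) g"
    and Cauchy: "\<forall>i\<ge>N. \<forall>j\<ge>N. bmo_norm p \<S> (\<lambda>x. f i x - f j x) < \<epsilon>" and "N \<le> i"
  shows "(\<lambda>x. f i x - g x) \<in> BMO p \<S>" and "bmo_norm p \<S> (\<lambda>x. f i x - g x) \<le> \<epsilon>"
proof -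
  have "(\<lambda>x. f i x - f (\<phi> n) x) \<in> BMO p \<S>" for n
    using BMO_diff[OF shapes \<open>0 < p\<close> BMO BMO] .
  note shifted = BMO_add_const[OF shapes \<open>0 < p\<close> this]
  have small: "bmo_norm p \<S> (\<lambda>x. (f i x - f (\<phi> n) x) + A n) \<le> \<epsilon>" if "N \<le> n" for n
    using Cauchy \<open>N \<le> i\<close> order_trans[OF that seq_suble[OF \<open>strict_mono \<phi>\<close>]]
    unfolding shifted(2) by (simp add: less_imp_le)
  have "converges_ae_L1 \<S> (\<lambda>n x. f i x - (f (\<phi> n) x - A n)) (\<lambda>x. f i x - g x)"
    using converges_ae_L1_diff[OF conv] BMO_integrable(1)[OF BMO] shapes by blast
  then have "converges_ae_L1 \<S> (\<lambda>n x. (f i x - f (\<phi> n) x) + A n) (\<lambda>x. f i x - g x)"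
    by (simp add: algebra_simps)
  then show "(\<lambda>x. f i x - g x) \<in> BMO p \<S>" and "bmo_norm p \<S> (\<lambda>x. f i x - g x) \<le> \<epsilon>"
    using BMO_limit_bmo_norm_le[where s = "\<lambda>n x. (f i x - f (\<phi> n) x) + A n",
        OF shapes \<open>0 < p\<close> shifted(1) small]
    by blast+
qed

theorem theorem3p9:
  fixes \<Omega> :: "'a::euclidean_space set" and \<S> :: "'a set set" and p :: real
    and f :: "nat \<Rightarrow> 'a \<Rightarrow> real"
  assumes "domain \<Omega>"
    and "basis_of_shapes \<S> \<Omega>"
    and "1 \<le> p"
    and "\<forall>i. f i \<in> BMO p \<S>"
    and "\<forall>\<epsilon>>0. \<exists>N. \<forall>i\<ge>N. \<forall>j\<ge>N. bmo_norm p \<S> (\<lambda>x. f i x - f j x) < \<epsilon>"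
  shows "\<exists>g \<in> BMO p \<S>. (\<lambda>i. bmo_norm p \<S> (\<lambda>x. f i x - g x)) \<longlonglongrightarrow> 0"
proof -
  have shapes: "\<forall>S\<in>\<S>. shape S" and "0 < p" and BMO: "\<And>i. f i \<in> BMO p \<S>"
    using assms(2-4) by (auto simp: basis_of_shapes_def)
  obtain \<phi> where "strict_mono \<phi>"
    and fast: "\<And>k. bmo_norm p \<S> (\<lambda>x. f (\<phi> (Suc k)) x - f (\<phi> k) x) < (1/2) ^ k"
    using Cauchy_subseq_geometric[OF assms(5)] by blast
  obtain A g where conv: "converges_ae_L1 \<S> (\<lambda>k x. f (\<phi> k) x - A k) g"
    using BMO_fast_Cauchy_converges[OF assms(1-3) BMO less_imp_le[OF fast]] .
  note close = BMO_Cauchy_subseq_limit_close[OF shapes \<open>0 < p\<close> BMO \<open>strict_mono \<phi>\<close> conv]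
  obtain N where "\<forall>i\<ge>N. \<forall>j\<ge>N. bmo_norm p \<S> (\<lambda>x. f i x - f j x) < 1"
    using assms(5) zero_less_one by blast
  then have "(\<lambda>x. f N x - (f N x - g x)) \<in> BMO p \<S>"
    using BMO_diff[OF shapes \<open>0 < p\<close> BMO close(1)] by blast
  moreover have "(\<lambda>i. bmo_norm p \<S> (\<lambda>x. f i x - g x)) \<longlonglongrightarrow> 0"
  proof (rule LIMSEQ_I)
    fix r :: real assume "0 < r"
    then obtain N where N: "\<forall>i\<ge>N. \<forall>j\<ge>N. bmo_norm p \<S> (\<lambda>x. f i x - f j x) < r / 2"
      using assms(5) half_gt_zero by blast
    have "norm (bmo_norm p \<S> (\<lambda>x. f i x - g x) - 0) < r" if "N \<le> i" for i
      using close(2)[OF N that] bmo_norm_nonneg[OF close(1)[OF N that]] \<open>0 < r\<close> by simp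
    then show "\<exists>N. \<forall>i\<ge>N. norm (bmo_norm p \<S> (\<lambda>x. f i x - g x) - 0) < r"
      by blast
  qed
  ultimately show ?thesis
    by auto
qed

end
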